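(* Let $\Sigma$ be a finite totally ordered alphabet, $\$$ a symbol smaller than all letters of $\Sigma$, and let $W \in \Sigma^+$ be given together with its Lyndon factorization $W = L_1 L_2 \cdots L_k$. There is an algorithm (called Bwt_Lynd) that proceeds in $k$ iterations, where iteration $i$ ($1 \le i \le k$) computes $bwt(L_1 \cdots L_i\$)$ from $bwt(L_1\cdots L_{i-1}\$)$ (by computing $bwt(L_i\$)$ and the suffix array of $L_i\$$, computing for each suffix of $L_i\$$ the number of suffixes of $L_1\cdots L_{i-1}\$$ lexicographically smaller than it using $C$ and $rank$ queries on $bwt(L_1\cdots L_{i-1}\$)$ supported in constant time, and merging), such that at the end of iteration $k$ it has correctly computed $bwt(L_1\cdots L_k\$) = bwt(W\$)$, each iteration $i$ runs in $O(\sum_{j=1}^{i} |L_j|)$ time, and the overall running time is $O(k^2 M)$, where $M = \max_{1\le i\le k} |L_i|$.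
   Context: A Lyndon word is a nonempty primitive word strictly smaller (lexicographically) than all its other cyclic shifts; the Lyndon factorization of $W$ is the unique factorization $W = L_1\cdots L_k$ into Lyndon words with $L_1 \ge \cdots \ge L_k$. For $Y \in \Sigma^*$, $bwt(Y\$)$ is obtained by sorting all suffixes of $Y\$$ lexicographically and listing, for each suffix in this order, the symbol cyclically preceding it in $Y\$$; the suffix array of $Y\$$ lists the starting positions of its suffixes in lexicographic order. For a word $u$ and symbol $x$, $C(u,x)$ is the number of symbols of $u$ smaller than $x$, and $rank(u,x,t)$ is the number of occurrences of $x$ in $u[1,t]$. *)

theory Defs
  imports Main "HOL-Library.List_Lexorder" "HOL-Library.Option_ord"
begin

text \<open>Symbols of the alphabet Sigma are elements of a finite linearly ordered type 'a.
  The end marker (dollar) is None :: 'a option, which (Option_ord) is smaller than every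
  letter Some x.  Words are compared lexicographically (List_Lexorder: a proper prefix is smaller).\<close>

definition dollar_word :: "'a list \<Rightarrow> 'a option list" where
  "dollar_word Y = map Some Y @ [None]"

definition suffix_array :: "('b::linorder) list \<Rightarrow> nat list" where
  "suffix_array Y = sort_key (\<lambda>i. drop i Y) [0..<length Y]"

definition bwt :: "('b::linorder) list \<Rightarrow> 'b list" where
  "bwt Y = map (\<lambda>i. Y ! ((i + length Y - 1) mod length Y)) (suffix_array Y)"

definition C :: "('b::linorder) list \<Rightarrow> 'b \<Rightarrow> nat" where
  "C u x = length (filter (\<lambda>y. y < x) u)"

definition rank :: "'b list \<Rightarrow> 'b \<Rightarrow> nat \<Rightarrow> nat" where
  "rank u x t = count_list (take t u) x"

definition primitive :: "'a list \<Rightarrow> bool" where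
  "primitive w \<longleftrightarrow> (\<forall>u k. w = concat (replicate k u) \<longrightarrow> k = 1)"

definition lyndon :: "('a::linorder) list \<Rightarrow> bool" where
  "lyndon w \<longleftrightarrow> w \<noteq> [] \<and> primitive w \<and> (\<forall>i. 0 < i \<and> i < length w \<longrightarrow> w < rotate i w)"

definition lyndon_factorization :: "('a::linorder) list \<Rightarrow> 'a list list \<Rightarrow> bool" where
  "lyndon_factorization W Ls \<longleftrightarrow>
     concat Ls = W \<and> (\<forall>L\<in>set Ls. lyndon L) \<and> sorted_wrt (\<lambda>x y. x \<ge> y) Ls"

text \<open>Cost model: each C / rank query costs 1 step (constant-time rank support);
  building bwt(L$) and the suffix array of L$ is charged |L$| steps (linear-time
  suffix array construction used as a black box); each output symbol of the merge costs 1.\<close>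

text \<open>back_ranks B L returns [r_0,...,r_n] (n = |L|), where r_j is meant to be the number of
  suffixes of P$ (with B = bwt(P$)) that are smaller than the suffix of L$ starting at j,
  computed right to left by backward search; plus the number of steps.\<close>
fun back_ranks :: "('a::linorder) option list \<Rightarrow> 'a list \<Rightarrow> nat list \<times> nat" where
  "back_ranks B [] = ([0], 1)"
| "back_ranks B (x # xs) =
     (let (rs, t) = back_ranks B xs; r = hd rs
      in ((C B (Some x) + rank B (Some x) r) # rs, t + 1))"

text \<open>Merge: the rows of B stay in order; an insertion (r, y) is emitted after exactly r rows of B.\<close>
fun merge_bwt :: "'b list \<Rightarrow> (nat \<times> 'b) list \<Rightarrow> nat \<Rightarrow> 'b list \<times> nat" where
  "merge_bwt [] [] k = ([], 1)"
| "merge_bwt (b # bs) [] k = (let (res, t) = merge_bwt bs [] (Suc k) in (b # res, t + 1))"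
| "merge_bwt [] ((r, y) # ins) k = (let (res, t) = merge_bwt [] ins k in (y # res, t + 1))"
| "merge_bwt (b # bs) ((r, y) # ins) k =
     (if r \<le> k then (let (res, t) = merge_bwt (b # bs) ins k in (y # res, t + 1))
      else (let (res, t) = merge_bwt bs ((r, y) # ins) (Suc k) in (b # res, t + 1)))"

definition lynd_step :: "('a::linorder) option list \<Rightarrow> 'a list \<Rightarrow> 'a option list \<times> nat" where
  "lynd_step B L =
     (let Y = dollar_word L; SA = suffix_array Y; BL = bwt Y;
          (rs, c_r) = back_ranks B L;
          ins = [(rs ! (SA ! m), BL ! m). m \<leftarrow> [0..<length Y], SA ! m \<noteq> 0];
          (B', c_m) = merge_bwt B ins 0
      in (B', length Y + c_r + length Y + c_m))"

fun lynd_run :: "('a::linorder) option list \<Rightarrow> 'a list list \<Rightarrow> ('a option list \<times> nat) list" where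
  "lynd_run B [] = []"
| "lynd_run B (L # Ls) = (let (B', c) = lynd_step B L in (B', c) # lynd_run B' Ls)"

text \<open>Bwt_Lynd: starts from bwt($) = [$]; the i-th entry (0-based) of the trace is the
  output of iteration i+1 together with its number of steps.\<close>
definition bwt_lynd_trace :: "('a::linorder) list list \<Rightarrow> ('a option list \<times> nat) list" where
  "bwt_lynd_trace Ls = lynd_run [None] Ls"

end

theory Submission
  imports Defs "HOL-Library.Sublist"
begin

text \<open>Let \<open>P = L\<^sub>1 \<cdots> L\<^sub>i\<^sub>-\<^sub>1\<close> and \<open>L = L\<^sub>i\<close>. Since \<open>L\<close> is Lyndon and at most every earlier factor,
  \<open>L < w L\<close> for every nonempty suffix \<open>w\<close> of \<open>P\<close>, so appending \<open>L\<close> preserves the relative order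
  of the suffixes of \<open>P$\<close>; and as a Lyndon word is smaller than its proper suffixes, it also
  preserves how they compare with the proper suffixes of \<open>L$\<close>. Hence \<open>bwt (P L$)\<close> arises from
  \<open>bwt (P$)\<close> by inserting the rows of the new suffixes, each after as many old rows as there are
  smaller old suffixes, and these numbers are exactly what backward search on \<open>bwt (P$)\<close> computes.
  Iteration \<open>i\<close> costs \<open>4 |L| + |P| + 5\<close> steps, which yields both bounds with the constant 10.\<close>


section \<open>Lexicographic order and Lyndon words\<close>

lemma append_less_append_cancel_left [simp]: "u @ x < u @ y \<longleftrightarrow> x < (y::'a::linorder list)"
  by (induction u) auto

lemma less_append_self_iff: "(u::'a::linorder list) < u @ x \<longleftrightarrow> x \<noteq> []"
proof (induction u)
  case Nil
  show ?case by (cases x) auto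
qed simp

lemma not_append_less_self: "\<not> (u::'a::linorder list) @ x < u"
  using append_less_append_cancel_left[of u x "[]"] by simp

lemma append_less_append_if_incomparable:
  "\<not> prefix u v \<Longrightarrow> \<not> prefix v u \<Longrightarrow> (u::'a::linorder list) @ x < v @ y \<longleftrightarrow> u < v"
proof (induction u arbitrary: v)
  case (Cons a u)
  then show ?case by (cases v) auto
qed simp

lemma less_imp_less_append:
  assumes "(u::'a::linorder list) < v"
  shows "u < v @ x"
proof (cases "prefix u v")
  case True
  then show ?thesis
    using assms by (auto simp: prefix_def less_append_self_iff)
next
  case False
  have "\<not> prefix v u"
    using assms by (auto simp: prefix_def not_append_less_self)
  then show ?thesis
    using append_less_append_if_incomparable[OF False, of "[]" x] assms by simp
qed

lemma lyndon_less_proper_suffix: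
  assumes lyn: "lyndon (L::'a::linorder list)" and j: "0 < j" "j < length L"
  shows "L < drop j L"
proof (rule ccontr)
  define x s where "x = take j L" and "s = drop j L"
  have L: "L = x @ s" and len_x: "length x = j"
    using j by (simp_all add: x_def s_def)
  have L_sx: "L < s @ x"
    using lyn j by (simp add: lyndon_def rotate_drop_take x_def s_def)
  assume "\<not> L < drop j L"
  moreover have "s \<noteq> L"
    using j by (auto simp: s_def dest: arg_cong[of _ _ length])
  ultimately have "s < L"
    by (simp add: s_def)
  show False
  proof (cases "prefix s L")
    case True
    then obtain y where L_sy: "L = s @ y"
      by (auto simp: prefix_def)
    have len_y: "length y = j"
      using L L_sy len_x by (metis add_left_cancel length_append add.commute)
    have "L < rotate (length s) L"
      using lyn j unfolding lyndon_def by (auto simp: s_def)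
    then have "L < y @ s"
      using L_sy len_y j by (simp add: rotate_drop_take)
    moreover have "x \<noteq> y"
      using \<open>L < y @ s\<close> L by auto
    then have "\<not> prefix x y" "\<not> prefix y x"
      using len_x len_y by (metis prefix_order.antisym_conv2 prefix_length_less order.irrefl)+
    ultimately have "x < y"
      using L append_less_append_if_incomparable by metis
    moreover have "y < x"
      using L_sx L_sy by simp
    ultimately show False by simp
  next
    case False
    have "\<not> prefix L s"
      using j by (auto simp: s_def dest: prefix_length_le)
    then have "s @ x < L @ []"
      using append_less_append_if_incomparable[OF False] \<open>s < L\<close> by blast
    then show False
      using L_sx by simp
  qed
qed

lemma lyndon_le_suffix:
  assumes "lyndon (F::'a::linorder list)" "suffix w F" "w \<noteq> []"
  shows "F \<le> w"
proof -
  obtain z where F: "F = z @ w"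
    using assms(2) by (auto simp: suffix_def)
  show ?thesis
  proof (cases "z = []")
    case False
    then show ?thesis
      using lyndon_less_proper_suffix[OF assms(1), of "length z"] F assms(3) by simp
  qed (simp add: F)
qed

text \<open>Such a \<open>w\<close> begins with a nonempty suffix of some factor, which is at least \<open>L\<close>.\<close>
lemma lyndon_less_suffix_append:
  assumes "\<forall>F\<in>set Fs. lyndon F \<and> L \<le> F" "lyndon (L::'a::linorder list)"
    and "suffix w (concat Fs)" "w \<noteq> []"
  shows "L < w @ L"
  using assms
proof (induction Fs arbitrary: w)
  case (Cons F Fs)
  have "suffix w (concat Fs) \<or> (\<exists>w'. w = w' @ concat Fs \<and> suffix w' F)"
    using Cons.prems(3) by (simp add: suffix_append)
  then consider "suffix w (concat Fs)" | w' where "w = w' @ concat Fs" "suffix w' F" "w' \<noteq> []"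
    by (metis append.left_neutral suffix_order.refl)
  then show ?case
  proof cases
    case 1
    then show ?thesis using Cons by simp
  next
    case 2
    have "F \<le> w'"
      using lyndon_le_suffix[of F w'] 2 Cons.prems(1) by simp
    then have "L \<le> w'"
      using Cons.prems(1) by (meson list.set_intros(1) order_trans)
    show ?thesis
    proof (cases "L = w'")
      case True
      moreover have "L \<noteq> []"
        using Cons.prems(2) by (simp add: lyndon_def)
      ultimately show ?thesis
        using 2 by (simp add: less_append_self_iff)
    next
      case False
      then have "L < w'"
        using \<open>L \<le> w'\<close> by simp
      then show ?thesis
        using 2 less_imp_less_append by (metis append.assoc)
    qed
  qed
qed (simp add: suffix_def)

lemma suffix_append_less_iff:
  assumes less_app: "\<And>w. suffix w P \<Longrightarrow> w \<noteq> [] \<Longrightarrow> L < w @ L"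
    and "suffix u P" "suffix v (P::'a::linorder list)"
  shows "u @ L < v @ L \<longleftrightarrow> u < v"
proof -
  consider w where "v = u @ w" | w where "u = v @ w" | "\<not> prefix u v" "\<not> prefix v u"
    by (auto simp: prefix_def)
  then show ?thesis
  proof cases
    case (1 w)
    have "w \<noteq> [] \<Longrightarrow> L < w @ L"
      using less_app assms(3) 1 suffix_appendD by blast
    then show ?thesis
      using 1 by (cases "w = []") (auto simp: less_append_self_iff)
  next
    case (2 w)
    have "w \<noteq> [] \<Longrightarrow> L < w @ L"
      using less_app assms(2) 2 suffix_appendD by blast
    then have "\<not> w @ L < L"
      by (cases "w = []") (auto dest: less_asym)
    then show ?thesis
      using 2 by (simp add: not_append_less_self)
  next
    case 3
    then show ?thesis
      by (simp add: append_less_append_if_incomparable)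
  qed
qed

lemma append_less_proper_suffix_iff:
  assumes less_suffix: "\<And>i. 0 < i \<Longrightarrow> i < length L \<Longrightarrow> (L::'a::linorder list) < drop i L"
    and j: "0 < j" "j \<le> length L"
  shows "u @ L < drop j L \<longleftrightarrow> u < drop j L"
proof -
  consider s where "drop j L = u @ s" "s \<noteq> []" | s where "u = drop j L @ s"
    | "\<not> prefix u (drop j L)" "\<not> prefix (drop j L) u"
    by (metis prefix_def append_Nil2)
  then show ?thesis
  proof cases
    case (1 s)
    have "s = drop (j + length u) L"
      using 1 by (metis add.commute append_eq_conv_conj drop_drop)
    moreover have "j + length u < length L"
      using arg_cong[OF 1(1), of length] 1(2) j by (cases s) auto
    ultimately have "L < s"
      using less_suffix j by simp
    then show ?thesis
      using 1 by (simp add: less_append_self_iff)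
  next
    case (2 s)
    then show ?thesis
      using not_append_less_self[of "drop j L"] by simp
  next
    case 3
    then show ?thesis
      using append_less_append_if_incomparable[OF 3, of L "[]"] by simp
  qed
qed

section \<open>Suffix arrays, the BWT and backward search\<close>

lemma length_dollar_word [simp]: "length (dollar_word P) = length P + 1"
  by (simp add: dollar_word_def)

lemma dollar_word_Cons: "dollar_word (x # xs) = Some x # dollar_word xs"
  by (simp add: dollar_word_def)

lemma drop_dollar_word: "i \<le> length P \<Longrightarrow> drop i (dollar_word P) = dollar_word (drop i P)"
  by (simp add: dollar_word_def drop_map)

lemma drop_dollar_word_append: "drop (length P + j) (dollar_word (P @ L)) = drop j (dollar_word L)"
  by (simp add: dollar_word_def)

lemma drop_dollar_word_append_left:
  "i \<le> length P \<Longrightarrow> drop i (dollar_word (P @ L)) = dollar_word (drop i P @ L)"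
  by (simp add: drop_dollar_word)

lemma dollar_word_less_iff: "dollar_word u < dollar_word v \<longleftrightarrow> (u::'a::linorder list) < v"
proof (induction u arbitrary: v)
  case Nil
  then show ?case by (cases v) (auto simp: dollar_word_def)
next
  case (Cons a u)
  then show ?case by (cases v) (auto simp: dollar_word_def)
qed

text \<open>A suffix \<open>s\<close> of \<open>Y\<close> is identified by its length.\<close>
definition cyclic_pred :: "'b list \<Rightarrow> 'b list \<Rightarrow> 'b" where
  "cyclic_pred Y s = Y ! ((length Y - length s + length Y - 1) mod length Y)"

definition smaller_suffixes :: "('b::linorder) list \<Rightarrow> 'b list \<Rightarrow> nat" where
  "smaller_suffixes Y X = card {i. i < length Y \<and> drop i Y < X}"

lemma set_suffix_array: "set (suffix_array Y) = {0..<length Y}"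
  by (simp add: suffix_array_def)

lemma distinct_suffix_array: "distinct (suffix_array Y)"
  by (simp add: suffix_array_def)

lemma length_suffix_array: "length (suffix_array Y) = length Y"
  by (simp add: suffix_array_def)

lemma sorted_suffix_array: "sorted (map (\<lambda>i. drop i Y) (suffix_array Y))"
  by (simp add: suffix_array_def)

lemma inj_on_drop: "inj_on (\<lambda>i. drop i Y) {0..<length Y}"
  by (rule inj_onI) (metis atLeastLessThan_iff diff_diff_cancel length_drop less_imp_le_nat)

lemma strict_sorted_suffix_array: "sorted_wrt (<) (map (\<lambda>i. drop i Y) (suffix_array Y))"
  using sorted_suffix_array[of Y] inj_on_drop[of Y] distinct_suffix_array[of Y]
  by (simp add: strict_sorted_iff distinct_map set_suffix_array)

lemma map_drop_suffix_array:
  "map (\<lambda>i. drop i Y) (suffix_array Y) = sorted_list_of_set ((\<lambda>i. drop i Y) ` {0..<length Y})"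
  by (rule strict_sorted_equal[symmetric])
    (simp_all add: strict_sorted_suffix_array set_suffix_array)

lemma cyclic_pred_drop:
  "i \<le> length Y \<Longrightarrow> cyclic_pred Y (drop i Y) = Y ! ((i + length Y - 1) mod length Y)"
  by (simp add: cyclic_pred_def)

lemma bwt_eq_map_cyclic_pred_drop: "bwt Y = map (\<lambda>i. cyclic_pred Y (drop i Y)) (suffix_array Y)"
  unfolding bwt_def by (rule map_cong) (auto simp: set_suffix_array cyclic_pred_drop)

lemma bwt_eq_map_cyclic_pred:
  "bwt Y = map (cyclic_pred Y) (sorted_list_of_set ((\<lambda>i. drop i Y) ` {0..<length Y}))"
  by (simp add: bwt_eq_map_cyclic_pred_drop flip: map_drop_suffix_array)

lemma length_filter_suffix_array:
  "length (filter Q (suffix_array Y)) = card {i. i < length Y \<and> Q i}"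
  by (simp add: distinct_length_filter distinct_suffix_array set_suffix_array Int_def conj_commute)

lemma take_length_filter_less_sorted:
  "sorted (map f xs) \<Longrightarrow> take (length (filter (\<lambda>i. f i < X) xs)) xs = filter (\<lambda>i. f i < X) xs"
proof (induction xs)
  case (Cons a xs)
  show ?case
  proof (cases "f a < X")
    case False
    then have "filter (\<lambda>i. f i < X) xs = []"
      using Cons.prems by (auto simp: filter_empty_conv dest: order_trans)
    then show ?thesis
      using False by simp
  qed (use Cons in simp)
qed simp

lemma cyclic_pred_index: "(i::nat) < n \<Longrightarrow> (i + n - 1) mod n = (if i = 0 then n - 1 else i - 1)"
  by (cases i) auto

lemma cyclic_pred_dollar_word:
  "i \<le> length P \<Longrightarrow> cyclic_pred (dollar_word P) (drop i (dollar_word P)) = (if i = 0 then None else Some (P ! (i - 1)))"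
  using cyclic_pred_index[of i "length P + 1"]
  by (simp add: cyclic_pred_drop) (auto simp: dollar_word_def nth_append)

lemma card_cyclic_pred_index:
  assumes "0 < (n::nat)"
  shows "card {i. i < n \<and> Q ((i + n - 1) mod n)} = card {i. i < n \<and> Q i}"
proof (rule bij_betw_same_card)
  have "Suc ((i + n - 1) mod n) mod n = i" if "i < n" for i
    using that assms cyclic_pred_index[OF that] by (cases "i = 0") auto
  moreover have "(Suc j mod n + n - 1) mod n = j" if "j < n" for j
    using that cyclic_pred_index[of "Suc j mod n" n] by (cases "Suc j = n") auto
  ultimately show "bij_betw (\<lambda>i. (i + n - 1) mod n)
      {i. i < n \<and> Q ((i + n - 1) mod n)} {i. i < n \<and> Q i}"
    using assms by (intro bij_betw_byWitness[where f' = "\<lambda>j. Suc j mod n"]) auto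
qed

lemma take_smaller_suffixes_bwt:
  "take (smaller_suffixes Y X) (bwt Y)
     = map (\<lambda>i. Y ! ((i + length Y - 1) mod length Y)) (filter (\<lambda>i. drop i Y < X) (suffix_array Y))"
proof -
  have "smaller_suffixes Y X = length (filter (\<lambda>i. drop i Y < X) (suffix_array Y))"
    by (simp add: smaller_suffixes_def length_filter_suffix_array)
  then show ?thesis
    by (simp add: bwt_def take_map take_length_filter_less_sorted[OF sorted_suffix_array])
qed

lemma C_bwt: "Y \<noteq> [] \<Longrightarrow> C (bwt Y) a = card {i. i < length Y \<and> Y ! i < a}"
  using card_cyclic_pred_index[of "length Y" "\<lambda>j. Y ! j < a"]
  by (simp add: C_def bwt_def filter_map comp_def length_filter_suffix_array)

lemma rank_bwt_smaller_suffixes: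
  "rank (bwt Y) a (smaller_suffixes Y X)
     = card {i. i < length Y \<and> drop i Y < X \<and> Y ! ((i + length Y - 1) mod length Y) = a}"
  by (simp add: rank_def take_smaller_suffixes_bwt count_list_eq_length_filter filter_map comp_def
      length_filter_suffix_array conj_commute eq_commute[of a])

text \<open>The row of the whole word \<open>Y\<close> has preceding symbol
  \<open>last Y\<close> although no suffix of the form \<open>a # _\<close> belongs to it; hence \<open>last Y \<noteq> a\<close>.\<close>
lemma smaller_suffixes_Cons:
  assumes "Y \<noteq> []" "last Y \<noteq> a"
  shows "smaller_suffixes Y (a # X) = C (bwt Y) a + rank (bwt Y) a (smaller_suffixes Y X)"
proof -
  define n where "n = length Y"
  define A B where "A = {j. j < n \<and> Y ! j < a}" and "B = {j. j < n \<and> Y ! j = a \<and> drop (Suc j) Y < X}"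
  have n: "0 < n"
    using assms(1) by (simp add: n_def)
  have "(drop i Y < X \<and> Y ! ((i + n - 1) mod n) = a)
      \<longleftrightarrow> (Y ! ((i + n - 1) mod n) = a \<and> drop (Suc ((i + n - 1) mod n)) Y < X)" if "i < n" for i
    using that assms cyclic_pred_index[OF that]
    by (cases "i = 0") (auto simp: n_def last_conv_nth)
  then have rank: "rank (bwt Y) a (smaller_suffixes Y X) = card B"
    using card_cyclic_pred_index[OF n, of "\<lambda>j. Y ! j = a \<and> drop (Suc j) Y < X"]
    by (simp add: rank_bwt_smaller_suffixes B_def n_def[symmetric] cong: conj_cong)
  have "drop j Y = Y ! j # drop (Suc j) Y" if "j < n" for j
    using that by (simp add: n_def Cons_nth_drop_Suc)
  then have "{j. j < n \<and> drop j Y < a # X} = A \<union> B"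
    by (auto simp: A_def B_def)
  then have "smaller_suffixes Y (a # X) = card (A \<union> B)"
    by (simp add: smaller_suffixes_def n_def)
  also have "\<dots> = card A + card B"
    by (rule card_Un_disjoint) (auto simp: A_def B_def)
  finally show ?thesis
    using rank assms(1) by (simp add: C_bwt A_def n_def)
qed

lemma smaller_suffixes_None: "smaller_suffixes Y [None] = 0"
proof -
  have "\<not> drop i Y < [None]" if "i < length Y" for i
    using that by (simp add: Cons_nth_drop_Suc[symmetric])
  then show ?thesis
    by (simp add: smaller_suffixes_def)
qed

lemma back_ranks_eq:
  "back_ranks (bwt (dollar_word P)) L
     = (map (\<lambda>j. smaller_suffixes (dollar_word P) (drop j (dollar_word L))) [0..<length L + 1],
        length L + 1)"
proof (induction L)
  case Nil
  show ?case
    by (simp add: dollar_word_def smaller_suffixes_None)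
next
  case (Cons x L)
  have "[0..<length (x # L) + 1] = 0 # map Suc [0..<length L + 1]"
    by (simp add: upt_conv_Cons map_Suc_upt del: upt_Suc)
  moreover have "[0..<length L + 1] = 0 # [1..<length L + 1]"
    by (simp add: upt_conv_Cons del: upt_Suc)
  moreover have "smaller_suffixes (dollar_word P) (Some x # dollar_word L)
      = C (bwt (dollar_word P)) (Some x)
        + rank (bwt (dollar_word P)) (Some x) (smaller_suffixes (dollar_word P) (dollar_word L))"
    by (rule smaller_suffixes_Cons) (simp_all add: dollar_word_def)
  ultimately show ?case
    using Cons by (simp add: dollar_word_Cons comp_def del: upt_Suc)
qed

section \<open>Merging\<close>

lemma merge_bwt_row:
  assumes "\<forall>(r, y) \<in> set ins. k < r"
  shows "merge_bwt (b # bs) ins k = (let (res, t) = merge_bwt bs ins (Suc k) in (b # res, t + 1))"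
  using assms by (cases ins) auto

lemma merge_bwt_insertion:
  "r \<le> k \<Longrightarrow> merge_bwt bs ((r, y) # ins) k = (let (res, t) = merge_bwt bs ins k in (y # res, t + 1))"
  by (cases bs) auto

lemma sorted_list_of_set_insert_least:
  assumes "finite S" "\<forall>y\<in>S. x < y"
  shows "sorted_list_of_set (insert x S) = x # sorted_list_of_set (S::'b::linorder set)"
proof -
  have "S - {x} = S"
    using assms(2) by auto
  then have "sorted_list_of_set (insert x S) = insort x (sorted_list_of_set S)"
    using assms(1) by (simp add: sorted_list_of_set_insert)
  also have "\<dots> = x # sorted_list_of_set S"
    using assms by (auto intro!: insort_is_Cons less_imp_le)
  finally show ?thesis .
qed

text \<open>Rows and insertions are labelled by sort keys; the rank of an insertion is the number of
  smaller row keys.\<close>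
lemma merge_bwt_sorted:
  fixes xs zs :: "'b::linorder list"
  assumes "sorted_wrt (<) xs" "sorted_wrt (<) zs" "set xs \<inter> set zs = {}"
  shows "merge_bwt (map G xs) (map (\<lambda>z. (k + length (filter (\<lambda>x. x < z) xs), G z)) zs) k
     = (map G (sorted_list_of_set (set xs \<union> set zs)), length xs + length zs + 1)"
  using assms
proof (induction "length xs + length zs" arbitrary: xs zs k rule: less_induct)
  case less
  consider "xs = []" "zs = []"
    | x xs' where "xs = x # xs'" "\<forall>z\<in>set zs. x < z"
    | z zs' where "zs = z # zs'" "\<forall>x\<in>set xs. z < x"
  proof (cases "xs = [] \<or> zs = []")
    case True
    with that show ?thesis by (cases xs; cases zs) auto
  next
    case False
    then obtain x xs' z zs' where xz: "xs = x # xs'" "zs = z # zs'"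
      by (auto simp: neq_Nil_conv)
    then have "x < z \<or> z < x"
      using less.prems(3) by (auto simp: neq_iff)
    with that xz less.prems(1,2) show ?thesis
      by (auto; meson less_trans)
  qed
  then show ?case
  proof cases
    case 1
    then show ?thesis by simp
  next
    case (2 x xs')
    have sorted: "sorted_list_of_set (set xs \<union> set zs) = x # sorted_list_of_set (set xs' \<union> set zs)"
      unfolding 2(1) list.set Un_insert_left
      using 2 less.prems(1) by (intro sorted_list_of_set_insert_least) auto
    have "map (\<lambda>z. (k + length (filter (\<lambda>x. x < z) xs), G z)) zs
        = map (\<lambda>z. (Suc k + length (filter (\<lambda>x. x < z) xs'), G z)) zs"
      using 2 by simp
    then have "merge_bwt (map G xs) (map (\<lambda>z. (k + length (filter (\<lambda>x. x < z) xs), G z)) zs) k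
        = (let (res, t) = merge_bwt (map G xs') (map (\<lambda>z. (Suc k + length (filter (\<lambda>x. x < z) xs'), G z)) zs) (Suc k)
           in (G x # res, t + 1))"
      using 2 by (simp only: list.map) (rule merge_bwt_row, auto)
    also have "\<dots> = (map G (sorted_list_of_set (set xs \<union> set zs)), length xs + length zs + 1)"
      using 2 less.prems less.hyps[of xs' zs "Suc k"] sorted by simp
    finally show ?thesis .
  next
    case (3 z zs')
    have "filter (\<lambda>x. x < z) xs = []"
      using 3 by (auto simp: filter_empty_conv)
    moreover have "sorted_list_of_set (set xs \<union> set zs) = z # sorted_list_of_set (set xs \<union> set zs')"
      unfolding 3(1) list.set Un_insert_right
      using 3 less.prems(2) by (intro sorted_list_of_set_insert_least) auto
    ultimately show ?thesis
      using 3 less.prems less.hyps[of xs zs' k] by (simp add: merge_bwt_insertion)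
  qed
qed

lemma comprehension_nth_eq_map_filter:
  "[(F (xs ! m), map g xs ! m). m \<leftarrow> [0..<length xs], Q (xs ! m)] = map (\<lambda>x. (F x, g x)) (filter Q xs)"
proof -
  have "[(F (xs ! m), map g xs ! m). m \<leftarrow> [0..<length xs], Q (xs ! m)]
      = concat (map (\<lambda>x. if Q x then [(F x, g x)] else []) (map (nth xs) [0..<length xs]))"
    by (simp add: comp_def) (intro arg_cong[where f = concat] map_cong, auto)
  also have "\<dots> = map (\<lambda>x. (F x, g x)) (filter Q xs)"
    unfolding map_nth by (induction xs) auto
  finally show ?thesis .
qed

section \<open>One iteration of the algorithm\<close>

locale lyndon_append =
  fixes P L :: "'a::linorder list"
  assumes less_suffix_append: "\<And>w. suffix w P \<Longrightarrow> w \<noteq> [] \<Longrightarrow> L < w @ L"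
    and less_proper_suffix: "\<And>j. 0 < j \<Longrightarrow> j < length L \<Longrightarrow> L < drop j L"
begin

text \<open>Sort keys of the merge: the suffixes of \<open>P L$\<close> starting in \<open>P$\<close>, in the order of the rows
  of \<open>bwt (P$)\<close> (the row of \<open>$\<close> becomes the row of \<open>L$\<close>), and those starting properly
  inside \<open>L$\<close>.\<close>
definition old_rows :: "'a option list list" where
  "old_rows = map (\<lambda>i. drop i (dollar_word (P @ L))) (suffix_array (dollar_word P))"

definition new_rows :: "'a option list list" where
  "new_rows = map (\<lambda>j. drop j (dollar_word L)) (filter (\<lambda>j. j \<noteq> 0) (suffix_array (dollar_word L)))"

lemma old_suffix_less_iff:
  assumes "i \<le> length P" "i' \<le> length P"
  shows "drop i (dollar_word (P @ L)) < drop i' (dollar_word (P @ L))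
    \<longleftrightarrow> drop i (dollar_word P) < drop i' (dollar_word P)"
  using assms
  by (simp add: drop_dollar_word_append_left drop_dollar_word dollar_word_less_iff
      suffix_append_less_iff[OF less_suffix_append suffix_drop suffix_drop])

lemma old_new_suffix_less_iff:
  assumes "i \<le> length P" "0 < j" "j \<le> length L"
  shows "drop i (dollar_word (P @ L)) < drop j (dollar_word L)
    \<longleftrightarrow> drop i (dollar_word P) < drop j (dollar_word L)"
  using assms
  by (simp add: drop_dollar_word_append_left drop_dollar_word dollar_word_less_iff
      append_less_proper_suffix_iff[OF less_proper_suffix])

lemma bwt_old: "bwt (dollar_word P) = map (cyclic_pred (dollar_word (P @ L))) old_rows"
proof -
  have "cyclic_pred (dollar_word P) (drop i (dollar_word P))
      = cyclic_pred (dollar_word (P @ L)) (drop i (dollar_word (P @ L)))" if "i \<le> length P" for i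
    using that by (auto simp: cyclic_pred_dollar_word nth_append)
  then show ?thesis
    unfolding bwt_eq_map_cyclic_pred_drop old_rows_def map_map
    by (intro map_cong) (auto simp: set_suffix_array)
qed

lemma strict_sorted_old_rows: "sorted_wrt (<) old_rows"
proof -
  have "sorted_wrt (\<lambda>i i'. drop i (dollar_word P) < drop i' (dollar_word P)) (suffix_array (dollar_word P))"
    using strict_sorted_suffix_array by (simp add: sorted_wrt_map)
  then have "sorted_wrt (\<lambda>i i'. drop i (dollar_word (P @ L)) < drop i' (dollar_word (P @ L)))
      (suffix_array (dollar_word P))"
    by (rule sorted_wrt_mono_rel[rotated]) (auto simp: set_suffix_array old_suffix_less_iff)
  then show ?thesis
    by (simp add: old_rows_def sorted_wrt_map)
qed

lemma strict_sorted_new_rows: "sorted_wrt (<) new_rows"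
  using strict_sorted_suffix_array[of "dollar_word L"]
  by (simp add: new_rows_def sorted_wrt_map sorted_wrt_filter)

lemma set_old_rows: "set old_rows = (\<lambda>i. drop i (dollar_word (P @ L))) ` {0..length P}"
  by (auto simp: old_rows_def set_suffix_array)

lemma set_new_rows: "set new_rows = (\<lambda>i. drop i (dollar_word (P @ L))) ` {Suc (length P)..length P + length L}"
proof -
  have "set new_rows = (\<lambda>j. drop (length P + j) (dollar_word (P @ L))) ` {1..length L}"
    by (auto simp: new_rows_def set_suffix_array drop_dollar_word_append)
  also have "\<dots> = (\<lambda>i. drop i (dollar_word (P @ L))) ` (plus (length P) ` {1..length L})"
    by (simp only: image_image)
  also have "\<dots> = (\<lambda>i. drop i (dollar_word (P @ L))) ` {Suc (length P)..length P + length L}"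
    by (simp add: add.commute)
  finally show ?thesis .
qed

lemma disjoint_old_new_rows: "set old_rows \<inter> set new_rows = {}"
proof -
  have "length L < length x" if "x \<in> set old_rows" for x
    using that by (auto simp: set_old_rows)
  moreover have "length z \<le> length L" if "z \<in> set new_rows" for z
    using that by (auto simp: set_new_rows)
  ultimately show ?thesis
    by fastforce
qed

lemma bwt_new:
  "bwt (dollar_word (P @ L)) = map (cyclic_pred (dollar_word (P @ L)))
     (sorted_list_of_set (set old_rows \<union> set new_rows))"
proof -
  have "{0..length P} \<union> {Suc (length P)..length P + length L} = {0..<length (dollar_word (P @ L))}"
    by auto
  then show ?thesis
    by (simp add: bwt_eq_map_cyclic_pred set_old_rows set_new_rows flip: image_Un)
qed

lemma length_old_rows: "length old_rows = length P + 1"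
  by (simp add: old_rows_def length_suffix_array)

lemma length_new_rows: "length new_rows = length L"
proof -
  have "{j. j \<noteq> 0} \<inter> {0..<length L + 1} = {1..length L}"
    by auto
  then show ?thesis
    by (simp add: new_rows_def distinct_length_filter distinct_suffix_array set_suffix_array)
qed

lemma insertions_eq:
  "[(map (\<lambda>j. smaller_suffixes (dollar_word P) (drop j (dollar_word L))) [0..<length L + 1]
        ! (suffix_array (dollar_word L) ! m),
     bwt (dollar_word L) ! m). m \<leftarrow> [0..<length (dollar_word L)], suffix_array (dollar_word L) ! m \<noteq> 0]
   = map (\<lambda>z. (length (filter (\<lambda>x. x < z) old_rows), cyclic_pred (dollar_word (P @ L)) z)) new_rows"
  (is "?ins = _")
proof -
  let ?SA = "suffix_array (dollar_word L)"
  have "?ins = map (\<lambda>j. (smaller_suffixes (dollar_word P) (drop j (dollar_word L)),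
      cyclic_pred (dollar_word L) (drop j (dollar_word L)))) (filter (\<lambda>j. j \<noteq> 0) ?SA)"
    unfolding bwt_eq_map_cyclic_pred_drop[of "dollar_word L"]
      length_suffix_array[of "dollar_word L", symmetric]
      comprehension_nth_eq_map_filter[where Q = "\<lambda>j. j \<noteq> 0"
        and F = "\<lambda>j. map (\<lambda>j. smaller_suffixes (dollar_word P) (drop j (dollar_word L))) [0..<length L + 1] ! j"]
    by (intro map_cong) (auto simp: set_suffix_array simp del: upt_Suc)
  also have "\<dots> = map (\<lambda>z. (length (filter (\<lambda>x. x < z) old_rows), cyclic_pred (dollar_word (P @ L)) z)) new_rows"
    unfolding new_rows_def map_map
  proof (rule map_cong[OF refl])
    fix j assume "j \<in> set (filter (\<lambda>j. j \<noteq> 0) ?SA)"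
    then have j: "0 < j" "j \<le> length L"
      by (auto simp: set_suffix_array)
    have "smaller_suffixes (dollar_word P) (drop j (dollar_word L))
        = card {i. i \<le> length P \<and> drop i (dollar_word (P @ L)) < drop j (dollar_word L)}"
      using j by (simp add: smaller_suffixes_def old_new_suffix_less_iff less_Suc_eq_le cong: conj_cong)
    also have "\<dots> = length (filter (\<lambda>x. x < drop j (dollar_word L)) old_rows)"
      by (simp add: old_rows_def filter_map comp_def length_filter_suffix_array less_Suc_eq_le)
    finally show "(smaller_suffixes (dollar_word P) (drop j (dollar_word L)),
        cyclic_pred (dollar_word L) (drop j (dollar_word L)))
      = ((\<lambda>z. (length (filter (\<lambda>x. x < z) old_rows), cyclic_pred (dollar_word (P @ L)) z)) \<circ>
         (\<lambda>j. drop j (dollar_word L))) j"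
      using j cyclic_pred_dollar_word[of "length P + j" "P @ L"] cyclic_pred_dollar_word[of j L]
      by (auto simp: drop_dollar_word_append nth_append)
  qed
  finally show ?thesis .
qed

lemma merge_bwt_old_new:
  "merge_bwt (bwt (dollar_word P))
     (map (\<lambda>z. (length (filter (\<lambda>x. x < z) old_rows), cyclic_pred (dollar_word (P @ L)) z)) new_rows) 0
   = (bwt (dollar_word (P @ L)), length P + length L + 2)"
  using merge_bwt_sorted[OF strict_sorted_old_rows strict_sorted_new_rows disjoint_old_new_rows,
      of "cyclic_pred (dollar_word (P @ L))" 0]
  by (simp add: bwt_old bwt_new length_old_rows length_new_rows)

lemma lynd_step_eq:
  "lynd_step (bwt (dollar_word P)) L = (bwt (dollar_word (P @ L)), 4 * length L + length P + 5)"
  unfolding lynd_step_def Let_def back_ranks_eq prod.case insertions_eq merge_bwt_old_new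
  by simp

end

lemma lyndon_append_concat:
  assumes "\<forall>F\<in>set Fs. lyndon F \<and> L \<le> F" "lyndon L"
  shows "lyndon_append (concat Fs) L"
  using assms lyndon_less_suffix_append lyndon_less_proper_suffix by unfold_locales blast+

lemma lynd_run_eq:
  assumes "\<forall>F\<in>set (Fs @ Ls). lyndon F" "sorted_wrt (\<lambda>x y. x \<ge> y) (Fs @ Ls)"
  shows "lynd_run (bwt (dollar_word (concat Fs))) Ls
    = map (\<lambda>i. (bwt (dollar_word (concat (Fs @ take (Suc i) Ls))),
                4 * length (Ls ! i) + length (concat (Fs @ take i Ls)) + 5)) [0..<length Ls]"
  using assms
proof (induction Ls arbitrary: Fs)
  case (Cons L Ls)
  have "lyndon_append (concat Fs) L"
    using Cons.prems by (intro lyndon_append_concat) (auto simp: sorted_wrt_append)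
  then have "lynd_step (bwt (dollar_word (concat Fs))) L
      = (bwt (dollar_word (concat (Fs @ [L]))), 4 * length L + length (concat Fs) + 5)"
    by (simp add: lyndon_append.lynd_step_eq)
  moreover have "[0..<length (L # Ls)] = 0 # map Suc [0..<length Ls]"
    by (simp add: map_Suc_upt upt_conv_Cons del: upt_Suc)
  ultimately show ?case
    using Cons.IH[of "Fs @ [L]"] Cons.prems by simp
qed simp

lemma bwt_singleton: "bwt [x] = [x]"
  by (simp add: bwt_def suffix_array_def)

lemma bwt_lynd_trace_eq:
  assumes "\<forall>F\<in>set Ls. lyndon F" "sorted_wrt (\<lambda>x y. x \<ge> y) Ls"
  shows "bwt_lynd_trace Ls
    = map (\<lambda>i. (bwt (dollar_word (concat (take (Suc i) Ls))),
                4 * length (Ls ! i) + length (concat (take i Ls)) + 5)) [0..<length Ls]"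
  using lynd_run_eq[of "[]" Ls] assms by (simp add: bwt_lynd_trace_def dollar_word_def bwt_singleton)

lemma sum_length_nth_eq_length_concat_take:
  "i < length Ls \<Longrightarrow> (\<Sum>j\<le>i. length (Ls ! j)) = length (concat (take (Suc i) Ls))"
proof (induction i)
  case 0
  then show ?case by (cases Ls) auto
next
  case (Suc i)
  then show ?case by (simp add: take_Suc_conv_app_nth)
qed

lemma lynd_step_cost_le:
  assumes "i < length Ls" "Ls ! i \<noteq> []"
  shows "4 * length (Ls ! i) + length (concat (take i Ls)) + 5 \<le> 10 * (\<Sum>j\<le>i. length (Ls ! j))"
proof -
  have "(\<Sum>j\<le>i. length (Ls ! j)) = length (concat (take i Ls)) + length (Ls ! i)"
    using assms(1) sum_length_nth_eq_length_concat_take[of i Ls] by (simp add: take_Suc_conv_app_nth)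
  moreover have "0 < length (Ls ! i)"
    using assms(2) by simp
  ultimately show ?thesis
    by linarith
qed

lemma sum_length_nth_le:
  assumes "i < length Ls"
  shows "(\<Sum>j\<le>i. length (Ls ! j)) \<le> length Ls * Max (length ` set Ls)"
proof -
  have "(\<Sum>j\<le>i. length (Ls ! j)) \<le> (\<Sum>j\<le>i. Max (length ` set Ls))"
    using assms by (intro sum_mono) auto
  also have "\<dots> = Suc i * Max (length ` set Ls)"
    by simp
  also have "\<dots> \<le> length Ls * Max (length ` set Ls)"
    using assms by (intro mult_right_mono) auto
  finally show ?thesis .
qed

theorem proposition3:
  "\<exists>c::nat. \<forall>(W::('a::{linorder,finite}) list) Ls.
     W \<noteq> [] \<longrightarrow> lyndon_factorization W Ls \<longrightarrow>
     (let T = bwt_lynd_trace Ls; k = length Ls; M = Max (length ` set Ls) in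
        length T = k \<and>
        (\<forall>i<k. fst (T ! i) = bwt (dollar_word (concat (take (Suc i) Ls))) \<and>
               snd (T ! i) \<le> c * (\<Sum>j\<le>i. length (Ls ! j))) \<and>
        fst (T ! (k - 1)) = bwt (dollar_word W) \<and>
        (\<Sum>i<k. snd (T ! i)) \<le> c * k\<^sup>2 * M)"
proof (intro exI[of _ 10] allI impI, goal_cases)
  case (1 W Ls)
  then have W: "concat Ls = W" "Ls \<noteq> []" and lyndon: "\<forall>F\<in>set Ls. lyndon F"
    and sorted: "sorted_wrt (\<lambda>x y. x \<ge> y) Ls"
    by (auto simp: lyndon_factorization_def)
  define k M where "k = length Ls" and "M = Max (length ` set Ls)"
  have cost: "4 * length (Ls ! i) + length (concat (take i Ls)) + 5 \<le> 10 * (\<Sum>j\<le>i. length (Ls ! j))"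
    if "i < k" for i
    using that lyndon by (intro lynd_step_cost_le) (auto simp: k_def lyndon_def)
  have "(\<Sum>i<k. 4 * length (Ls ! i) + length (concat (take i Ls)) + 5) \<le> (\<Sum>i<k. 10 * (k * M))"
    using cost sum_length_nth_le by (intro sum_mono) (fastforce simp: k_def M_def)
  then show ?case
    using cost W by (simp add: bwt_lynd_trace_eq[OF lyndon sorted] k_def M_def power2_eq_square)
qed

end
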